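(* There is a constant $A=A(\mathcal I)>0$ such that for all $b_0,b\in\Theta$, $$A^2\max\Big\{K(\pi_{b_0},\pi_b),\ E_{b_0}\Big[\Big(\log\frac{\pi_{b_0}(X_0)}{\pi_b(X_0)}\Big)^2\Big]\Big\}\le\|b_0-b\|_2^2.$$
   Context: Known $\sigma\in C^2_{per}([0,1])$ (1-periodic $C^2$) with $0<\sigma_L\le\sigma\le\sigma_U$; known $K_0$, $\Theta=\{f\in C^1_{per}([0,1]):\|f\|_\infty+\|f'\|_\infty\le K_0\}$; $\mathcal I=\{K_0,\sigma_L,\sigma_U\}$. For $b\in\Theta$, with $I_b(x)=\int_0^x2b(y)/\sigma^2(y)dy$, $\pi_b(x)=\frac{e^{I_b(x)}}{H_b\sigma^2(x)}\big(e^{I_b(1)}\int_x^1e^{-I_b(y)}dy+\int_0^xe^{-I_b(y)}dy\big)$, $x\in[0,1]$, with $H_b$ chosen so that $\int_0^1\pi_b=1$ (the invariant density of $X\bmod1$ for the solution $X$ of $dX_t=b(X_t)dt+\sigma(X_t)dW_t$). Under $E_{b_0}$, $X_0$ has density $\pi_{b_0}$. $K(p,q)=\int\log(p/q)\,p$ is the Kullback–Leibler divergence. *)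

theory Defs
  imports "HOL-Analysis.Analysis"
begin

text \<open>1-periodic functions on the real line (identified with functions on [0,1]).\<close>
definition periodic1 :: "(real \<Rightarrow> real) \<Rightarrow> bool" where
  "periodic1 f \<longleftrightarrow> (\<forall>x. f (x + 1) = f x)"

definition C1_fun :: "(real \<Rightarrow> real) \<Rightarrow> bool" where
  "C1_fun f \<longleftrightarrow> (\<forall>x. (f has_real_derivative deriv f x) (at x)) \<and> continuous_on UNIV (deriv f)"

definition C1_per :: "(real \<Rightarrow> real) \<Rightarrow> bool" where
  "C1_per f \<longleftrightarrow> periodic1 f \<and> C1_fun f"

definition C2_per :: "(real \<Rightarrow> real) \<Rightarrow> bool" where
  "C2_per f \<longleftrightarrow> periodic1 f \<and> C1_fun f \<and> C1_fun (deriv f)"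

definition sup_norm :: "(real \<Rightarrow> real) \<Rightarrow> real" where
  "sup_norm f = (SUP x\<in>{0..1}. \<bar>f x\<bar>)"

definition Theta :: "real \<Rightarrow> (real \<Rightarrow> real) set" where
  "Theta K0 = {f. C1_per f \<and> sup_norm f + sup_norm (deriv f) \<le> K0}"

definition I_b :: "(real \<Rightarrow> real) \<Rightarrow> (real \<Rightarrow> real) \<Rightarrow> real \<Rightarrow> real" where
  "I_b \<sigma> b x = integral {0..x} (\<lambda>y. 2 * b y / (\<sigma> y)\<^sup>2)"

text \<open>Unnormalised invariant density.\<close>
definition pi_un :: "(real \<Rightarrow> real) \<Rightarrow> (real \<Rightarrow> real) \<Rightarrow> real \<Rightarrow> real" where
  "pi_un \<sigma> b x = exp (I_b \<sigma> b x) / (\<sigma> x)\<^sup>2 *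
     (exp (I_b \<sigma> b 1) * integral {x..1} (\<lambda>y. exp (- I_b \<sigma> b y))
      + integral {0..x} (\<lambda>y. exp (- I_b \<sigma> b y)))"

definition H_b :: "(real \<Rightarrow> real) \<Rightarrow> (real \<Rightarrow> real) \<Rightarrow> real" where
  "H_b \<sigma> b = integral {0..1} (pi_un \<sigma> b)"

text \<open>Invariant density of X mod 1 on [0,1].\<close>
definition pi_b :: "(real \<Rightarrow> real) \<Rightarrow> (real \<Rightarrow> real) \<Rightarrow> real \<Rightarrow> real" where
  "pi_b \<sigma> b x = pi_un \<sigma> b x / H_b \<sigma> b"

definition KL :: "(real \<Rightarrow> real) \<Rightarrow> (real \<Rightarrow> real) \<Rightarrow> real" where
  "KL p q = integral {0..1} (\<lambda>x. ln (p x / q x) * p x)"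

text \<open>E_{b0}[(log (pi_{b0}(X_0)/pi_b(X_0)))^2] where X_0 has density pi_{b0}.\<close>
definition KL2 :: "(real \<Rightarrow> real) \<Rightarrow> (real \<Rightarrow> real) \<Rightarrow> real" where
  "KL2 p q = integral {0..1} (\<lambda>x. (ln (p x / q x))\<^sup>2 * p x)"

definition L2sq :: "(real \<Rightarrow> real) \<Rightarrow> real" where
  "L2sq f = integral {0..1} (\<lambda>x. (f x)\<^sup>2)"

end

theory Submission
  imports Defs
begin

text \<open>
  The L1-distance of the drifts controls sup_{[0,1]} |I_{b0} - I_b| by D = 2 ||b0 - b||_1 / \<sigma>L^2.
  The three exponential factors in the unnormalised density each move by at most e^D, so the
  unnormalised densities and hence their normalising constants differ by at most e^{3D}, and the
  log-likelihood ratio ln(pi_{b0}/pi_b) is bounded by 6D on [0,1]. A uniform bound M on the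
  log-ratio of two probability densities bounds KL by 2 M^2 and its second moment by M^2, and
  Cauchy--Schwarz turns the L1-norm into the L2-norm. Only continuity of \<sigma> and b and the lower
  bound \<sigma>L enter, so the constant depends on \<sigma>L alone.
\<close>

lemma integral_pos_if_continuous_pos:
  fixes f :: "real \<Rightarrow> real"
  assumes "continuous_on {a..b} f" "a < b" "\<And>x. x \<in> {a..b} \<Longrightarrow> 0 < f x"
  shows "0 < integral {a..b} f"
proof -
  obtain x0 where x0: "x0 \<in> {a..b}" "\<And>y. y \<in> {a..b} \<Longrightarrow> f x0 \<le> f y"
    using continuous_attains_inf[of "{a..b}" f] assms by auto
  have "0 < (b - a) * f x0" using assms x0 by simp
  also have "\<dots> = integral {a..b} (\<lambda>x. f x0)" using assms by simp
  also have "\<dots> \<le> integral {a..b} f"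
    by (rule integral_le) (use assms x0 integrable_continuous_real in auto)
  finally show ?thesis .
qed

lemma integral_le_const_mult:
  fixes f g :: "'a::euclidean_space \<Rightarrow> real"
  assumes "f integrable_on S" "g integrable_on S" "\<And>x. x \<in> S \<Longrightarrow> f x \<le> k * g x"
  shows "integral S f \<le> k * integral S g"
  using integral_le[OF assms(1) integrable_on_mult_right[OF assms(2)]] assms(3) by simp

lemma integral_abs_squared_le_L2sq:
  assumes "continuous_on {0..1} d"
  shows "(integral {0..1} (\<lambda>x. \<bar>d x\<bar>))\<^sup>2 \<le> L2sq d"
proof -
  define m where "m = integral {0..1} (\<lambda>x. \<bar>d x\<bar>)"
  have abs_int: "(\<lambda>x. \<bar>d x\<bar>) integrable_on {0..1}"
    and sq_int: "(\<lambda>x. (d x)\<^sup>2) integrable_on {0..1}"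
    and dev_int: "(\<lambda>x. (\<bar>d x\<bar> - m)\<^sup>2) integrable_on {0..1}"
    using assms by (auto intro!: integrable_continuous_real continuous_intros)
  have "0 \<le> integral {0..1} (\<lambda>x. (\<bar>d x\<bar> - m)\<^sup>2)"
    by (rule integral_nonneg[OF dev_int]) auto
  also have "\<dots> = integral {0..1} (\<lambda>x. ((d x)\<^sup>2 - 2 * m * \<bar>d x\<bar>) + m\<^sup>2)"
    by (rule integral_cong) (simp add: power2_eq_square algebra_simps)
  also have "\<dots> = L2sq d - 2 * m * m + m\<^sup>2"
  proof -
    have cm: "(\<lambda>x. 2 * m * \<bar>d x\<bar>) integrable_on {0..1}"
      using integrable_on_mult_right[OF abs_int] .
    show ?thesis
      using integral_add[OF integrable_diff[OF sq_int cm] integrable_const_ivl[of "m\<^sup>2" 0 1]]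
        integral_diff[OF sq_int cm]
      unfolding L2sq_def m_def by simp
  qed
  finally show ?thesis unfolding m_def[symmetric] by (simp add: power2_eq_square)
qed

lemma abs_ln_divide_le:
  fixes p q M :: real
  assumes "0 < p" "0 < q" "p \<le> exp M * q" "q \<le> exp M * p"
  shows "\<bar>ln (p / q)\<bar> \<le> M"
proof -
  have "p / q \<le> exp M" "q / p \<le> exp M"
    using assms by (simp_all add: pos_divide_le_eq mult.commute)
  then have "ln (p / q) \<le> M" "ln (q / p) \<le> M"
    using assms by (simp_all add: ln_le_cancel_iff[symmetric, where y = "exp M"])
  moreover have "ln (q / p) = - ln (p / q)" using assms by (simp add: ln_div)
  ultimately show ?thesis by linarith
qed

lemma mult_exp_minus_exp_le:
  fixes s :: real
  shows "s * exp s - exp s + 1 \<le> (exp s + 1) * s\<^sup>2"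
proof (cases "0 \<le> s")
  case True
  have "1 \<le> (1 + s) * (1 - s + s\<^sup>2)"
    using True by (simp add: algebra_simps power2_eq_square)
  also have "\<dots> \<le> exp s * (1 - s + s\<^sup>2)"
  proof (rule mult_right_mono[OF exp_ge_add_one_self])
    have "0 \<le> (s - 1/2)\<^sup>2 + 3/4" by simp
    then show "0 \<le> 1 - s + s\<^sup>2" by (simp add: power2_eq_square algebra_simps)
  qed
  finally have "s * exp s - exp s + 1 \<le> exp s * s\<^sup>2" by (simp add: algebra_simps)
  also have "\<dots> \<le> (exp s + 1) * s\<^sup>2" by (simp add: distrib_right)
  finally show ?thesis .
next
  case False
  have "(1 - s) * (1 + s) \<le> (1 - s) * exp s"
    using False by (intro mult_left_mono exp_ge_add_one_self) auto
  then have "s * exp s - exp s + 1 \<le> s\<^sup>2" by (simp add: algebra_simps power2_eq_square)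
  also have "\<dots> \<le> (exp s + 1) * s\<^sup>2" by (simp add: distrib_right)
  finally show ?thesis .
qed

lemma ln_divide_mult_le:
  fixes p q :: real
  assumes "0 < p" "0 < q"
  shows "ln (p / q) * p \<le> (p + q) * (ln (p / q))\<^sup>2 + p - q"
proof -
  define s where "s = ln (p / q)"
  have p: "p = q * exp s" unfolding s_def using assms by simp
  have "q * (s * exp s - exp s + 1) \<le> q * ((exp s + 1) * s\<^sup>2)"
    using assms by (intro mult_left_mono mult_exp_minus_exp_le) auto
  also have "q * (s * exp s - exp s + 1) = s * p - p + q" using p by (simp add: algebra_simps)
  also have "q * ((exp s + 1) * s\<^sup>2) = (p + q) * s\<^sup>2" using p by (simp add: algebra_simps)
  finally show ?thesis unfolding s_def by simp
qed

lemma KL2_le_of_abs_ln_le: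
  assumes p: "continuous_on {0..1} p" "\<And>x. x \<in> {0..1} \<Longrightarrow> 0 < p x" "integral {0..1} p = 1"
    and q: "continuous_on {0..1} q" "\<And>x. x \<in> {0..1} \<Longrightarrow> 0 < q x"
    and M: "\<And>x. x \<in> {0..1} \<Longrightarrow> \<bar>ln (p x / q x)\<bar> \<le> M"
  shows "KL2 p q \<le> M\<^sup>2"
proof -
  have "continuous_on {0..1} (\<lambda>x. (ln (p x / q x))\<^sup>2 * p x)"
    using p q by (intro continuous_intros) (auto dest: p(2) q(2) simp: less_imp_neq[symmetric])
  then have "KL2 p q \<le> M\<^sup>2 * integral {0..1} p" unfolding KL2_def
  proof (intro integral_le_const_mult integrable_continuous_real p(1))
    fix x :: real assume x: "x \<in> {0..1}"
    show "(ln (p x / q x))\<^sup>2 * p x \<le> M\<^sup>2 * p x"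
    proof (rule mult_right_mono)
      show "(ln (p x / q x))\<^sup>2 \<le> M\<^sup>2"
        using power_mono[OF M[OF x] abs_ge_zero, of 2] by simp
    qed (use p(2)[OF x] in simp)
  qed
  then show ?thesis using p(3) by simp
qed

lemma KL_le_of_abs_ln_le:
  assumes p: "continuous_on {0..1} p" "\<And>x. x \<in> {0..1} \<Longrightarrow> 0 < p x" "integral {0..1} p = 1"
    and q: "continuous_on {0..1} q" "\<And>x. x \<in> {0..1} \<Longrightarrow> 0 < q x" "integral {0..1} q = 1"
    and M: "\<And>x. x \<in> {0..1} \<Longrightarrow> \<bar>ln (p x / q x)\<bar> \<le> M"
  shows "KL p q \<le> 2 * M\<^sup>2"
proof -
  have int_p: "p integrable_on {0..1}" and int_q: "q integrable_on {0..1}"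
    using p(1) q(1) by (simp_all add: integrable_continuous_real)
  have cont: "continuous_on {0..1} (\<lambda>x. ln (p x / q x) * p x)"
    using p q by (intro continuous_intros) (auto dest: p(2) q(2) simp: less_imp_neq[symmetric])
  have "KL p q \<le> integral {0..1} (\<lambda>x. M\<^sup>2 * (p x + q x) + (p x - q x))"
    unfolding KL_def
  proof (rule integral_le)
    show "(\<lambda>x. ln (p x / q x) * p x) integrable_on {0..1}"
      using cont by (rule integrable_continuous_real)
    show "(\<lambda>x. M\<^sup>2 * (p x + q x) + (p x - q x)) integrable_on {0..1}"
      using int_p int_q by (intro integrable_add integrable_diff integrable_on_mult_right)
    fix x :: real assume x: "x \<in> {0..1}"
    have "(ln (p x / q x))\<^sup>2 \<le> M\<^sup>2"
      using power_mono[OF M[OF x] abs_ge_zero, of 2] by simp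
    then have "(p x + q x) * (ln (p x / q x))\<^sup>2 \<le> M\<^sup>2 * (p x + q x)"
      using p(2)[OF x] q(2)[OF x] by (simp add: mult.commute mult_left_mono)
    then show "ln (p x / q x) * p x \<le> M\<^sup>2 * (p x + q x) + (p x - q x)"
      using ln_divide_mult_le[OF p(2)[OF x] q(2)[OF x]] by linarith
  qed
  also have "\<dots> = 2 * M\<^sup>2"
    using int_p int_q p(3) q(3)
    by (simp add: integral_add integral_diff integrable_add integrable_diff integrable_on_mult_right)
  finally show ?thesis .
qed

locale nondegenerate_diffusion =
  fixes \<sigma>L :: real and \<sigma> b :: "real \<Rightarrow> real"
  assumes continuous_\<sigma>: "continuous_on UNIV \<sigma>"
    and continuous_b: "continuous_on UNIV b"
    and \<sigma>L_pos: "0 < \<sigma>L"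
    and \<sigma>L_le: "\<And>x. \<sigma>L \<le> \<sigma> x"
begin

lemma \<sigma>_pos: "0 < \<sigma> x"
  using \<sigma>L_pos \<sigma>L_le[of x] by linarith

lemma continuous_on_I_b: "continuous_on {0..1} (I_b \<sigma> b)"
proof -
  have "continuous_on {0..1} (\<lambda>y. 2 * b y / (\<sigma> y)\<^sup>2)"
    using continuous_\<sigma> continuous_b \<sigma>_pos
    by (auto intro!: continuous_intros intro: continuous_on_subset simp: less_imp_neq[symmetric])
  then show ?thesis
    unfolding I_b_def[abs_def] by (intro indefinite_integral_continuous_1 integrable_continuous_real)
qed

lemma continuous_on_exp_minus_I_b: "continuous_on {0..1} (\<lambda>y. exp (- I_b \<sigma> b y))"
  using continuous_on_I_b by (intro continuous_intros)

lemma integrable_exp_minus_I_b: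
  "{c..d} \<subseteq> {0..1} \<Longrightarrow> (\<lambda>y. exp (- I_b \<sigma> b y)) integrable_on {c..d}"
  using continuous_on_exp_minus_I_b by (metis continuous_on_subset integrable_continuous_real)

lemma continuous_on_pi_un: "continuous_on {0..1} (pi_un \<sigma> b)"
proof -
  have "continuous_on {0..1} (\<lambda>x. integral {x..1} (\<lambda>y. exp (- I_b \<sigma> b y)))"
    and "continuous_on {0..1} (\<lambda>x. integral {0..x} (\<lambda>y. exp (- I_b \<sigma> b y)))"
    using integrable_exp_minus_I_b[of 0 1]
    by (simp_all add: indefinite_integral_continuous_1 indefinite_integral_continuous_1')
  then show ?thesis
    unfolding pi_un_def[abs_def] using continuous_on_I_b continuous_\<sigma> \<sigma>_pos
    by (auto intro!: continuous_intros intro: continuous_on_subset simp: less_imp_neq[symmetric])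
qed

lemma pi_un_pos:
  assumes x: "x \<in> {0..1}"
  shows "0 < pi_un \<sigma> b x"
proof -
  let ?e = "\<lambda>y. exp (- I_b \<sigma> b y)"
  have int_pos: "0 < integral {c..d} ?e" if "0 \<le> c" "c < d" "d \<le> 1" for c d
    using that continuous_on_subset[OF continuous_on_exp_minus_I_b]
    by (intro integral_pos_if_continuous_pos) auto
  have int_nonneg: "0 \<le> integral {c..d} ?e" if "0 \<le> c" "d \<le> 1" for c d
    using that integrable_exp_minus_I_b[of c d] by (intro integral_nonneg) auto
  have "0 < exp (I_b \<sigma> b 1) * integral {x..1} ?e + integral {0..x} ?e"
  proof (cases "x < 1")
    case True
    then show ?thesis using x int_pos[of x 1] int_nonneg[of 0 x] by (simp add: add_pos_nonneg)
  next
    case False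
    then show ?thesis using x int_pos[of 0 1] int_nonneg[of 1 1] by (simp add: add_nonneg_pos)
  qed
  then show ?thesis unfolding pi_un_def using \<sigma>_pos[of x] by simp
qed

lemma H_b_pos: "0 < H_b \<sigma> b"
  unfolding H_b_def using continuous_on_pi_un pi_un_pos by (intro integral_pos_if_continuous_pos) auto

lemma continuous_on_pi_b: "continuous_on {0..1} (pi_b \<sigma> b)"
  unfolding pi_b_def[abs_def] using continuous_on_pi_un H_b_pos by (intro continuous_intros) auto

lemma pi_b_pos: "x \<in> {0..1} \<Longrightarrow> 0 < pi_b \<sigma> b x"
  unfolding pi_b_def using pi_un_pos H_b_pos by simp

lemma integral_pi_b: "integral {0..1} (pi_b \<sigma> b) = 1"
  unfolding pi_b_def using H_b_pos by (simp add: H_b_def)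

end

lemma I_b_diff_le:
  assumes "nondegenerate_diffusion \<sigma>L \<sigma> b0" "nondegenerate_diffusion \<sigma>L \<sigma> b" and x: "x \<in> {0..1}"
  shows "\<bar>I_b \<sigma> b0 x - I_b \<sigma> b x\<bar> \<le> 2 / \<sigma>L\<^sup>2 * integral {0..1} (\<lambda>y. \<bar>b0 y - b y\<bar>)"
proof -
  interpret d0: nondegenerate_diffusion \<sigma>L \<sigma> b0 by fact
  interpret d: nondegenerate_diffusion \<sigma>L \<sigma> b by fact
  let ?g = "\<lambda>c y. 2 * c y / (\<sigma> y)\<^sup>2"
  let ?h = "\<lambda>y. 2 / \<sigma>L\<^sup>2 * \<bar>b0 y - b y\<bar>"
  have int_g: "?g c integrable_on {0..x}" if "continuous_on UNIV c" for c
    using that d.continuous_\<sigma> d.\<sigma>_pos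
    by (intro integrable_continuous_real)
      (auto intro!: continuous_intros intro: continuous_on_subset simp: less_imp_neq[symmetric])
  have int_h: "?h integrable_on {0..1}"
    using d0.continuous_b d.continuous_b d.\<sigma>L_pos
    by (intro integrable_continuous_real) (auto intro!: continuous_intros intro: continuous_on_subset)
  have "I_b \<sigma> b0 x - I_b \<sigma> b x = integral {0..x} (\<lambda>y. ?g b0 y - ?g b y)"
    unfolding I_b_def using integral_diff[OF int_g int_g] d0.continuous_b d.continuous_b by simp
  also have "\<bar>\<dots>\<bar> \<le> integral {0..x} ?h"
  proof (rule integral_norm_bound_integral[where f = "\<lambda>y. ?g b0 y - ?g b y", simplified])
    show "(\<lambda>y. ?g b0 y - ?g b y) integrable_on {0..x}"
      using integrable_diff[OF int_g int_g] d0.continuous_b d.continuous_b by simp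
    show "?h integrable_on {0..x}" using integrable_subinterval_real[OF int_h] x by simp
    fix y
    have "\<sigma>L\<^sup>2 \<le> (\<sigma> y)\<^sup>2" using d.\<sigma>L_pos d.\<sigma>L_le[of y] by (intro power_mono) auto
    then have "2 * \<bar>b0 y - b y\<bar> / (\<sigma> y)\<^sup>2 \<le> 2 * \<bar>b0 y - b y\<bar> / \<sigma>L\<^sup>2"
      using d.\<sigma>L_pos d.\<sigma>_pos[of y] by (intro divide_left_mono) auto
    moreover have "?g b0 y - ?g b y = 2 * (b0 y - b y) / (\<sigma> y)\<^sup>2"
      by (simp add: diff_divide_distrib right_diff_distrib)
    ultimately show "\<bar>?g b0 y - ?g b y\<bar> \<le> ?h y"
      by (simp only: abs_divide abs_mult) simp
  qed
  also have "\<dots> \<le> integral {0..1} ?h"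
    using x int_h integrable_subinterval_real[OF int_h, of 0 x] by (intro integral_subset_le) auto
  finally show ?thesis by simp
qed

lemma pi_un_le_exp_mult:
  assumes "nondegenerate_diffusion \<sigma>L \<sigma> b0" "nondegenerate_diffusion \<sigma>L \<sigma> b"
    and D: "\<And>y. y \<in> {0..1} \<Longrightarrow> \<bar>I_b \<sigma> b0 y - I_b \<sigma> b y\<bar> \<le> D" and x: "x \<in> {0..1}"
  shows "pi_un \<sigma> b0 x \<le> exp (3 * D) * pi_un \<sigma> b x"
proof -
  interpret d0: nondegenerate_diffusion \<sigma>L \<sigma> b0 by fact
  interpret d: nondegenerate_diffusion \<sigma>L \<sigma> b by fact
  define E where "E = exp D"
  let ?u = "\<lambda>y. exp (- I_b \<sigma> b0 y)" and ?v = "\<lambda>y. exp (- I_b \<sigma> b y)"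
  have E: "1 \<le> E" using D[of 0] by (simp add: E_def)
  have exp_I: "exp (I_b \<sigma> b0 y) \<le> E * exp (I_b \<sigma> b y)" if "y \<in> {0..1}" for y
    using D[OF that] by (simp add: E_def flip: exp_add)
  have exp_minus_I: "?u y \<le> E * ?v y" if "y \<in> {0..1}" for y
    using D[OF that] by (simp add: E_def flip: exp_add)
  have int_e: "integral {c..d} ?u \<le> E * integral {c..d} ?v"
      "0 \<le> integral {c..d} ?v" "0 \<le> integral {c..d} ?u"
    if "0 \<le> c" "d \<le> 1" for c d
  proof -
    have "{c..d} \<subseteq> {0..1}" using that by auto
    then show "integral {c..d} ?u \<le> E * integral {c..d} ?v"
        "0 \<le> integral {c..d} ?v" "0 \<le> integral {c..d} ?u"
      using exp_minus_I d0.integrable_exp_minus_I_b d.integrable_exp_minus_I_b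
      by (auto intro!: integral_le_const_mult integral_nonneg)
  qed
  have "exp (I_b \<sigma> b0 1) * integral {x..1} ?u + integral {0..x} ?u
      \<le> (E * exp (I_b \<sigma> b 1)) * (E * integral {x..1} ?v) + E * integral {0..x} ?v"
    using x exp_I[of 1] int_e[of x 1] int_e[of 0 x] E
    by (intro add_mono mult_mono) (auto intro: order_trans[OF _ mult_right_mono])
  also have "\<dots> \<le> E\<^sup>2 * (exp (I_b \<sigma> b 1) * integral {x..1} ?v + integral {0..x} ?v)"
    using E int_e(2)[of 0 x] x mult_right_mono[of E "E * E" "integral {0..x} ?v"]
    by (simp add: power2_eq_square algebra_simps)
  finally have "pi_un \<sigma> b0 x \<le> exp (I_b \<sigma> b0 x) / (\<sigma> x)\<^sup>2 *
      (E\<^sup>2 * (exp (I_b \<sigma> b 1) * integral {x..1} ?v + integral {0..x} ?v))"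
    unfolding pi_un_def by (intro mult_left_mono) auto
  also have "\<dots> \<le> (E * exp (I_b \<sigma> b x)) / (\<sigma> x)\<^sup>2 *
      (E\<^sup>2 * (exp (I_b \<sigma> b 1) * integral {x..1} ?v + integral {0..x} ?v))"
    using exp_I[OF x] x int_e(2)[of x 1] int_e(2)[of 0 x]
    by (intro mult_right_mono divide_right_mono) auto
  also have "\<dots> = E ^ 3 * pi_un \<sigma> b x"
    unfolding pi_un_def by (simp add: power3_eq_cube power2_eq_square)
  also have "E ^ 3 = exp (3 * D)" by (simp add: E_def flip: exp_of_nat_mult)
  finally show ?thesis .
qed

lemma pi_b_le_exp_mult:
  assumes d0: "nondegenerate_diffusion \<sigma>L \<sigma> b0" and d: "nondegenerate_diffusion \<sigma>L \<sigma> b"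
    and D: "\<And>y. y \<in> {0..1} \<Longrightarrow> \<bar>I_b \<sigma> b0 y - I_b \<sigma> b y\<bar> \<le> D" and x: "x \<in> {0..1}"
  shows "pi_b \<sigma> b0 x \<le> exp (6 * D) * pi_b \<sigma> b x"
proof -
  interpret d0: nondegenerate_diffusion \<sigma>L \<sigma> b0 by fact
  interpret d: nondegenerate_diffusion \<sigma>L \<sigma> b by fact
  define k where "k = exp (3 * D)"
  have "\<bar>I_b \<sigma> b y - I_b \<sigma> b0 y\<bar> \<le> D" if "y \<in> {0..1}" for y
    using D[OF that] by (simp add: abs_minus_commute)
  then have "H_b \<sigma> b \<le> k * H_b \<sigma> b0"
    unfolding H_b_def k_def using pi_un_le_exp_mult[OF d d0]
    by (intro integral_le_const_mult integrable_continuous_real d.continuous_on_pi_un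
        d0.continuous_on_pi_un) auto
  then have H: "1 / H_b \<sigma> b0 \<le> k / H_b \<sigma> b"
    using d0.H_b_pos d.H_b_pos by (simp add: field_simps)
  have "pi_b \<sigma> b0 x \<le> k * pi_un \<sigma> b x * (1 / H_b \<sigma> b0)"
    unfolding pi_b_def k_def using pi_un_le_exp_mult[OF d0 d D x] d0.H_b_pos
    by (simp add: divide_right_mono)
  also have "\<dots> \<le> k * pi_un \<sigma> b x * (k / H_b \<sigma> b)"
    using H d.pi_un_pos[OF x] by (intro mult_left_mono) (auto simp: k_def)
  also have "\<dots> = exp (6 * D) * pi_b \<sigma> b x"
    unfolding pi_b_def k_def by (simp flip: exp_add)
  finally show ?thesis .
qed

lemma abs_ln_pi_b_divide_le:
  assumes "nondegenerate_diffusion \<sigma>L \<sigma> b0" "nondegenerate_diffusion \<sigma>L \<sigma> b" and x: "x \<in> {0..1}"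
  shows "\<bar>ln (pi_b \<sigma> b0 x / pi_b \<sigma> b x)\<bar> \<le> 12 / \<sigma>L\<^sup>2 * integral {0..1} (\<lambda>y. \<bar>b0 y - b y\<bar>)"
proof -
  interpret d0: nondegenerate_diffusion \<sigma>L \<sigma> b0 by fact
  interpret d: nondegenerate_diffusion \<sigma>L \<sigma> b by fact
  define D where "D = 2 / \<sigma>L\<^sup>2 * integral {0..1} (\<lambda>y. \<bar>b0 y - b y\<bar>)"
  have "\<bar>I_b \<sigma> b0 y - I_b \<sigma> b y\<bar> \<le> D" "\<bar>I_b \<sigma> b y - I_b \<sigma> b0 y\<bar> \<le> D" if "y \<in> {0..1}" for y
    using I_b_diff_le[OF assms(1,2) that] I_b_diff_le[OF assms(2,1) that]
    by (simp_all add: D_def abs_minus_commute)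
  then have "pi_b \<sigma> b0 x \<le> exp (6 * D) * pi_b \<sigma> b x" "pi_b \<sigma> b x \<le> exp (6 * D) * pi_b \<sigma> b0 x"
    using pi_b_le_exp_mult[OF assms(1,2) _ x] pi_b_le_exp_mult[OF assms(2,1) _ x] by auto
  then have "\<bar>ln (pi_b \<sigma> b0 x / pi_b \<sigma> b x)\<bar> \<le> 6 * D"
    using d0.pi_b_pos[OF x] d.pi_b_pos[OF x] by (intro abs_ln_divide_le)
  then show ?thesis by (simp add: D_def)
qed

lemma max_KL_KL2_pi_b_le:
  assumes "nondegenerate_diffusion \<sigma>L \<sigma> b0" "nondegenerate_diffusion \<sigma>L \<sigma> b"
  shows "max (KL (pi_b \<sigma> b0) (pi_b \<sigma> b)) (KL2 (pi_b \<sigma> b0) (pi_b \<sigma> b))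
    \<le> 2 * (12 / \<sigma>L\<^sup>2 * integral {0..1} (\<lambda>y. \<bar>b0 y - b y\<bar>))\<^sup>2"
    (is "_ \<le> 2 * ?M\<^sup>2")
proof -
  interpret d0: nondegenerate_diffusion \<sigma>L \<sigma> b0 by fact
  interpret d: nondegenerate_diffusion \<sigma>L \<sigma> b by fact
  have "KL (pi_b \<sigma> b0) (pi_b \<sigma> b) \<le> 2 * ?M\<^sup>2" "KL2 (pi_b \<sigma> b0) (pi_b \<sigma> b) \<le> ?M\<^sup>2"
    using abs_ln_pi_b_divide_le[OF assms] d0.continuous_on_pi_b d0.pi_b_pos d0.integral_pi_b
      d.continuous_on_pi_b d.pi_b_pos d.integral_pi_b
    by (auto intro!: KL_le_of_abs_ln_le KL2_le_of_abs_ln_le)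
  then show ?thesis using zero_le_power2[of ?M] by linarith
qed

lemma continuous_on_if_C1_fun: "C1_fun f \<Longrightarrow> continuous_on UNIV f"
  unfolding C1_fun_def by (meson DERIV_isCont continuous_at_imp_continuous_on)

lemma nondegenerate_diffusion_if_in_Theta:
  assumes "C2_per \<sigma>" "\<And>x. \<sigma>L \<le> \<sigma> x" "0 < \<sigma>L" "b \<in> Theta K0"
  shows "nondegenerate_diffusion \<sigma>L \<sigma> b"
  using assms continuous_on_if_C1_fun unfolding C2_per_def Theta_def C1_per_def
  by unfold_locales auto

theorem mainTheorem18:
  fixes K0 \<sigma>L \<sigma>U :: real
  assumes "0 < \<sigma>L"
  shows "\<exists>A>0. \<forall>\<sigma> b0 b.
     C2_per \<sigma> \<longrightarrow> (\<forall>x. \<sigma>L \<le> \<sigma> x \<and> \<sigma> x \<le> \<sigma>U) \<longrightarrow>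
     b0 \<in> Theta K0 \<longrightarrow> b \<in> Theta K0 \<longrightarrow>
     A\<^sup>2 * max (KL (pi_b \<sigma> b0) (pi_b \<sigma> b)) (KL2 (pi_b \<sigma> b0) (pi_b \<sigma> b))
       \<le> L2sq (\<lambda>x. b0 x - b x)"
proof (intro exI[of _ "\<sigma>L\<^sup>2 / 18"] conjI allI impI)
  fix \<sigma> b0 b :: "real \<Rightarrow> real"
  assume "C2_per \<sigma>" "\<forall>x. \<sigma>L \<le> \<sigma> x \<and> \<sigma> x \<le> \<sigma>U" "b0 \<in> Theta K0" "b \<in> Theta K0"
  then have d0: "nondegenerate_diffusion \<sigma>L \<sigma> b0" and d: "nondegenerate_diffusion \<sigma>L \<sigma> b"
    using assms by (auto intro!: nondegenerate_diffusion_if_in_Theta)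
  define m where "m = integral {0..1} (\<lambda>y. \<bar>b0 y - b y\<bar>)"
  have "(\<sigma>L\<^sup>2 / 18)\<^sup>2 * max (KL (pi_b \<sigma> b0) (pi_b \<sigma> b)) (KL2 (pi_b \<sigma> b0) (pi_b \<sigma> b))
      \<le> (\<sigma>L\<^sup>2 / 18)\<^sup>2 * (2 * (12 / \<sigma>L\<^sup>2 * m)\<^sup>2)"
    unfolding m_def by (intro mult_left_mono max_KL_KL2_pi_b_le[OF d0 d]) simp
  also have "\<dots> = 8 / 9 * m\<^sup>2"
    using assms by (simp add: power2_eq_square field_simps)
  also have "\<dots> \<le> m\<^sup>2" by simp
  also have "\<dots> \<le> L2sq (\<lambda>x. b0 x - b x)"
    unfolding m_def
    using nondegenerate_diffusion.continuous_b[OF d0] nondegenerate_diffusion.continuous_b[OF d]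
    by (intro integral_abs_squared_le_L2sq) (auto intro!: continuous_intros intro: continuous_on_subset)
  finally show "(\<sigma>L\<^sup>2 / 18)\<^sup>2 * max (KL (pi_b \<sigma> b0) (pi_b \<sigma> b)) (KL2 (pi_b \<sigma> b0) (pi_b \<sigma> b))
      \<le> L2sq (\<lambda>x. b0 x - b x)" .
qed (use assms in simp)

end
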